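(* Let $p$ be a prime, let $i>j\ge1$ be integers with $i$ coprime to $p$, let $u=t+u_it^{pi+1}$ and let $v=t+v_{pj}t^{pj}+\dots\in S$ (i.e. $v\equiv t+v_{pj}t^{pj}\pmod{t^{pj+1}}$), where $u_i,v_{pj}\in\mathbb F_p$ and $u_iv_{pj}\neq0$. Write $[v,u]=t+\sum_{k\ge2}\alpha_kt^k$. Then the smallest $k\equiv1\pmod p$ with $\alpha_k\neq0$ is $k=p(pj+i-1)+1$, and $\alpha_{p(pj+i-1)+1}=-i\,u_iv_{pj}$.
   Context: $S$ denotes the group, under substitution $(f\circ g)(t)=f(g(t))$, of all power series $t+\sum_{k\ge1}(a_{pk}t^{pk}+a_{pk+1}t^{pk+1})$ with coefficients in $\mathbb F_p$. The commutator is $[v,u]=v\circ u\circ v^{-1}\circ u^{-1}$. *)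

theory Defs
  imports "HOL-Computational_Algebra.Computational_Algebra"
begin

definition S_set :: "nat \<Rightarrow> 'a::field fps set" where
  "S_set p = {f. f $ 0 = 0 \<and> f $ 1 = 1 \<and>
      (\<forall>n\<ge>2. n mod p \<noteq> 0 \<and> n mod p \<noteq> 1 \<longrightarrow> f $ n = 0)}"

definition fps_comm :: "'a::field fps \<Rightarrow> 'a fps \<Rightarrow> 'a fps" where
  "fps_comm v u = v oo u oo fps_inv v oo fps_inv u"

end

theory Submission
  imports Defs
begin

(*
  Put z = u^-1 and y = v^-1 o z (compositional inverses), so that [v,u] = v o u o y, and let
  N = p (p j + i - 1). In characteristic p every k = 1 (mod p) satisfies k a_k = a_k, so the
  coefficient of t^k in W = [v,u] is that of t^(k-1) in W'; it therefore suffices to show that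
  W' - 1 vanishes below degree N and has coefficient -i u_i v_pj at t^N. The chain rule gives

    (W' - 1) (v' o y) (u' o z) = (v' o (u o y) - v' o y) (u' o y) + (v' o y) u_i (y^(pi) - z^(pi)),

  where the product on the left has constant term 1. Since v lies in S, all terms of v' - 1 are
  t^(pm) with m >= j, so the first summand only sees (u o y)^p - y^p = (u_i y^(pi+1))^p and
  vanishes to order N + 1. For the second, y - z = -v_pj t^(pj) + O(t^(pj+1)), so by the
  Frobenius y^p - z^p = (y - z)^p starts with (-v_pj)^p t^(p^2 j), and factoring y^p - z^p out
  of y^(pi) - z^(pi) leaves a sum of i series starting with t^(p(i-1)). The leading term is
  thus -i u_i v_pj^p t^N, and v_pj^p = v_pj in F_p.
*)

section \<open>Order of vanishing of formal power series\<close>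

lemma fps_X_power_dvd_iff: "fps_X ^ k dvd (f :: 'a::comm_ring_1 fps) \<longleftrightarrow> (\<forall>n<k. f $ n = 0)"
proof
  assume "fps_X ^ k dvd f"
  then show "\<forall>n<k. f $ n = 0" by (auto elim!: dvdE simp: fps_X_power_mult_nth)
next
  assume "\<forall>n<k. f $ n = 0"
  then have "f = fps_X ^ k * fps_shift k f"
    by (intro fps_ext) (simp add: fps_X_power_mult_nth)
  then show "fps_X ^ k dvd f" by (metis dvd_triv_left)
qed

lemma fps_X_power_dvd_nth: "fps_X ^ k dvd (f :: 'a::comm_ring_1 fps) \<Longrightarrow> n < k \<Longrightarrow> f $ n = 0"
  by (simp add: fps_X_power_dvd_iff)

lemma fps_X_dvd_iff_nth_0: "fps_X dvd (f :: 'a::comm_ring_1 fps) \<longleftrightarrow> f $ 0 = 0"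
  using fps_X_power_dvd_iff[of 1 f] by simp

lemma fps_X_power_2_dvd_sub_X_iff:
  "fps_X ^ 2 dvd (f - fps_X :: 'a::comm_ring_1 fps) \<longleftrightarrow> f $ 0 = 0 \<and> f $ 1 = 1"
  by (auto simp: fps_X_power_dvd_iff less_2_cases_iff)

lemma fps_mult_nth_add_of_dvd:
  fixes f g :: "'a::comm_ring_1 fps"
  assumes "fps_X ^ a dvd f" "fps_X ^ b dvd g"
  shows "(f * g) $ (a + b) = f $ a * g $ b"
proof -
  obtain f' g' where "f = fps_X ^ a * f'" "g = fps_X ^ b * g'"
    using assms by (auto elim!: dvdE)
  moreover from this have "f * g = fps_X ^ (a + b) * (f' * g')"
    by (simp add: power_add mult_ac)
  ultimately show ?thesis by (simp add: fps_X_power_mult_nth)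
qed

lemma fps_X_power_dvd_power: "fps_X ^ a dvd f \<Longrightarrow> fps_X ^ (a * m) dvd (f :: 'a::comm_ring_1 fps) ^ m"
  by (simp add: power_mult dvd_power_same)

lemma fps_power_nth_mult_of_dvd:
  fixes f :: "'a::comm_ring_1 fps"
  assumes "fps_X ^ a dvd f"
  shows "(f ^ m) $ (a * m) = (f $ a) ^ m"
proof (induction m)
  case (Suc m)
  have "(f * f ^ m) $ (a + a * m) = f $ a * (f ^ m) $ (a * m)"
    using assms fps_X_power_dvd_power[OF assms] by (rule fps_mult_nth_add_of_dvd)
  then show ?case using Suc by simp
qed simp

lemma
  fixes f g :: "'a::comm_ring_1 fps"
  assumes "fps_X ^ q dvd f" "fps_X ^ q dvd g"
  shows fps_X_power_dvd_power_diff_sum: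
      "fps_X ^ (q * (n - 1)) dvd (\<Sum>l<n. g ^ (n - Suc l) * f ^ l)"
    and fps_power_diff_sum_nth: "f $ q = g $ q \<Longrightarrow>
      (\<Sum>l<n. g ^ (n - Suc l) * f ^ l) $ (q * (n - 1)) = of_nat n * (f $ q) ^ (n - 1)"
proof -
  have split: "q * (n - 1) = q * (n - Suc l) + q * l" if "l < n" for l
    using that by (simp flip: add_mult_distrib2)
  have "fps_X ^ (q * (n - 1)) dvd g ^ (n - Suc l) * f ^ l" if "l < n" for l
    unfolding split[OF that] power_add
    using assms by (intro mult_dvd_mono fps_X_power_dvd_power)
  then show "fps_X ^ (q * (n - 1)) dvd (\<Sum>l<n. g ^ (n - Suc l) * f ^ l)"
    by (intro dvd_sum) simp
  assume "f $ q = g $ q"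
  then have "(g ^ (n - Suc l) * f ^ l) $ (q * (n - 1)) = (f $ q) ^ (n - 1)" if "l < n" for l
  proof -
    have "(g ^ (n - Suc l) * f ^ l) $ (q * (n - 1))
        = (g ^ (n - Suc l)) $ (q * (n - Suc l)) * (f ^ l) $ (q * l)"
      unfolding split[OF that]
      using assms by (intro fps_mult_nth_add_of_dvd fps_X_power_dvd_power)
    also have "\<dots> = (f $ q) ^ (n - 1)"
      using assms \<open>f $ q = g $ q\<close> \<open>l < n\<close>
      by (simp add: fps_power_nth_mult_of_dvd flip: power_add)
    finally show ?thesis .
  qed
  then show "(\<Sum>l<n. g ^ (n - Suc l) * f ^ l) $ (q * (n - 1)) = of_nat n * (f $ q) ^ (n - 1)"
    by (simp add: fps_sum_nth)
qed

lemma
  fixes f g :: "'a::comm_ring_1 fps"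
  assumes "fps_X ^ m dvd f - g" "fps_X ^ q dvd f" "fps_X ^ q dvd g"
  shows fps_X_power_dvd_power_diff: "fps_X ^ (m + q * (n - 1)) dvd f ^ n - g ^ n"
    and fps_power_diff_nth: "f $ q = g $ q \<Longrightarrow>
      (f ^ n - g ^ n) $ (m + q * (n - 1)) = of_nat n * (f $ q) ^ (n - 1) * (f - g) $ m"
proof -
  have factor: "f ^ n - g ^ n = (f - g) * (\<Sum>l<n. g ^ (n - Suc l) * f ^ l)"
    by (rule power_diff_sumr2)
  show "fps_X ^ (m + q * (n - 1)) dvd f ^ n - g ^ n"
    unfolding factor power_add
    using assms by (intro mult_dvd_mono fps_X_power_dvd_power_diff_sum)
  show "(f ^ n - g ^ n) $ (m + q * (n - 1)) = of_nat n * (f $ q) ^ (n - 1) * (f - g) $ m"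
    if "f $ q = g $ q"
    unfolding factor
    using fps_mult_nth_add_of_dvd[OF assms(1) fps_X_power_dvd_power_diff_sum[OF assms(2,3)]]
      fps_power_diff_sum_nth[OF assms(2,3) that]
    by (simp add: mult.commute)
qed

lemma fps_X_power_dvd_mult_unit:
  fixes f g :: "'a::field fps"
  assumes "g $ 0 \<noteq> 0" "fps_X ^ N dvd f * g"
  shows "fps_X ^ N dvd f" and "f $ N = (f * g) $ N / g $ 0"
proof -
  have "f = (f * g) * inverse g" using assms(1) by (simp add: inverse_mult_eq_1' mult.assoc)
  then show "fps_X ^ N dvd f" using assms(2) by (metis dvd_mult2)
  then have "(f * g) $ (N + 0) = f $ N * g $ 0" by (intro fps_mult_nth_add_of_dvd) simp_all
  then show "f $ N = (f * g) $ N / g $ 0" using assms(1) by simp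
qed

lemma fps_X_power_Suc_dvd_compose_diff:
  fixes f g :: "'a::idom fps"
  assumes "fps_X ^ 2 dvd g - fps_X" "fps_X ^ k dvd f"
  shows "fps_X ^ (k + 1) dvd (f oo g) - f"
proof -
  have g: "g $ 0 = 0" "g $ 1 = 1" using assms(1) by (simp_all add: fps_X_power_2_dvd_sub_X_iff)
  obtain h where f: "f = fps_X ^ k * h" using assms(2) by (auto elim: dvdE)
  have "(f oo g) - f = (g ^ k - fps_X ^ k) * (h oo g) + fps_X ^ k * ((h oo g) - h)"
    using g by (simp add: f fps_compose_mult_distrib fps_compose_power[symmetric] algebra_simps)
  moreover have "fps_X ^ (k + 1) dvd g ^ k - fps_X ^ k"
  proof -
    have "fps_X ^ (2 + 1 * (k - 1)) dvd g ^ k - fps_X ^ k"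
      using assms(1) g by (intro fps_X_power_dvd_power_diff) (simp_all add: fps_X_dvd_iff_nth_0)
    moreover have "fps_X ^ (k + 1) dvd (fps_X :: 'a fps) ^ (2 + 1 * (k - 1))"
      by (rule le_imp_power_dvd) simp
    ultimately show ?thesis by (blast intro: dvd_trans)
  qed
  moreover have "fps_X dvd (h oo g) - h" using g by (simp add: fps_X_dvd_iff_nth_0)
  ultimately show ?thesis by (simp add: mult_dvd_mono)
qed

lemma fps_X_power_2_dvd_fps_inv_sub_X:
  fixes v :: "'a::field fps"
  assumes "v $ 0 = 0" "v $ 1 = 1"
  shows "fps_X ^ 2 dvd fps_inv v - fps_X"
proof -
  have v1: "v $ Suc 0 = 1" using assms(2) by simp
  have inv0: "fps_inv v $ 0 = 0" by (simp add: fps_inv_def)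
  have "(v oo fps_inv v) $ Suc 0 = fps_inv v $ Suc 0"
    using assms(1) v1 inv0 by (simp add: fps_compose_nth)
  then show ?thesis
    using inv0 fps_inv_right[of v] assms(1) v1 by (simp add: fps_X_power_2_dvd_sub_X_iff)
qed

lemma fps_inv_sub_X:
  fixes v :: "'a::field fps"
  assumes "v $ 0 = 0" "v $ 1 = 1" "fps_X ^ k dvd v - fps_X"
  shows "fps_X ^ (k + 1) dvd (fps_inv v - fps_X) + (v - fps_X)"
proof -
  define f where "f = fps_inv v"
  have f: "fps_X ^ 2 dvd f - fps_X"
    unfolding f_def using assms(1,2) by (rule fps_X_power_2_dvd_fps_inv_sub_X)
  have "v oo f = fps_X"
    unfolding f_def using assms(1,2) by (intro fps_inv_right) simp_all
  then have "(v - fps_X) oo f = fps_X - f"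
    using f by (simp add: fps_compose_sub_distrib fps_X_power_2_dvd_sub_X_iff)
  then have "- ((f - fps_X) + (v - fps_X)) = ((v - fps_X) oo f) - (v - fps_X)"
    by (simp add: algebra_simps)
  moreover have "fps_X ^ (k + 1) dvd ((v - fps_X) oo f) - (v - fps_X)"
    using f assms(3) by (rule fps_X_power_Suc_dvd_compose_diff)
  ultimately have "fps_X ^ (k + 1) dvd - ((f - fps_X) + (v - fps_X))"
    by (simp only:)
  then show ?thesis unfolding f_def dvd_minus_iff .
qed

lemma fps_inv_compose_sub:
  fixes v z :: "'a::field fps"
  assumes "v $ 0 = 0" "v $ 1 = 1" "fps_X ^ k dvd v - fps_X" "fps_X ^ 2 dvd z - fps_X"
  shows "fps_X ^ (k + 1) dvd (fps_inv v oo z) - z + (v - fps_X)"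
proof -
  define g where "g = fps_inv v - fps_X"
  have g: "fps_X ^ (k + 1) dvd g + (v - fps_X)"
    unfolding g_def using assms(1-3) by (rule fps_inv_sub_X)
  have "fps_X ^ k dvd g + (v - fps_X)" by (rule dvd_trans[OF le_imp_power_dvd g]) simp
  then have "fps_X ^ k dvd g"
    using assms(3) by (metis add_diff_cancel_right' dvd_diff)
  then have "fps_X ^ (k + 1) dvd (g oo z) - g"
    using assms(4) by (intro fps_X_power_Suc_dvd_compose_diff) simp_all
  moreover have "(fps_inv v oo z) - z + (v - fps_X) = ((g oo z) - g) + (g + (v - fps_X))"
    using assms(4) by (simp add: g_def fps_compose_sub_distrib fps_X_power_2_dvd_sub_X_iff)
  ultimately show ?thesis using g by (metis dvd_add)
qed

section \<open>Characteristic p and finite prime fields\<close>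

lemma freshmans_dream_diff:
  assumes "prime CHAR('a::comm_ring_1)"
  shows "(x - y :: 'a) ^ CHAR('a) = x ^ CHAR('a) - y ^ CHAR('a)"
  using freshmans_dream[OF assms refl, of x "- y"] minus_power_prime_CHAR[OF refl assms, of y]
  by simp

lemma of_nat_eq_1_if_mod_CHAR: "n mod CHAR('a::semiring_1) = 1 \<Longrightarrow> of_nat n = (1 :: 'a)"
  by (metis of_nat_0 of_nat_1 of_nat_CHAR of_nat_add of_nat_mult add_0 mult_0 mult_div_mod_eq)

lemma fps_nth_eq_deriv_sub_1_nth_if_mod_CHAR:
  fixes f :: "'a::comm_ring_1 fps"
  assumes "k mod CHAR('a) = 1" "2 \<le> k"
  shows "f $ k = (fps_deriv f - 1) $ (k - 1)"
proof -
  have "(fps_deriv f - 1) $ (k - 1) = of_nat k * f $ k" using assms(2) by simp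
  then show ?thesis using of_nat_eq_1_if_mod_CHAR[OF assms(1)] by simp
qed

lemma of_nat_neq_0_if_coprime_CHAR: "coprime n CHAR('a::semiring_1) \<Longrightarrow> of_nat n \<noteq> (0 :: 'a)"
  by (auto simp: of_nat_eq_0_iff_char_dvd)

lemma fps_deriv_X_plus_monom_CHAR:
  fixes c :: "'a::comm_ring_1"
  shows "fps_deriv (fps_X + fps_const c * fps_X ^ (CHAR('a) * i + 1))
    = 1 + fps_const c * fps_X ^ (CHAR('a) * i)"
proof (rule fps_ext)
  fix n
  have "of_nat (CHAR('a) * i + 1) = (1 :: 'a)" by simp
  then show "fps_deriv (fps_X + fps_const c * fps_X ^ (CHAR('a) * i + 1)) $ n
    = (1 + fps_const c * fps_X ^ (CHAR('a) * i)) $ n"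
    by (cases "n = 0") auto
qed

lemma
  fixes y z :: "'a::comm_ring_1 fps"
  assumes "CHAR('a) = p" "prime p"
    and "fps_X ^ k dvd y - z" "fps_X ^ 2 dvd y - fps_X" "fps_X ^ 2 dvd z - fps_X"
  shows fps_X_power_dvd_power_CHAR_diff:
      "fps_X ^ (p * k + p * (n - 1)) dvd y ^ (p * n) - z ^ (p * n)"
    and fps_power_CHAR_diff_nth:
      "(y ^ (p * n) - z ^ (p * n)) $ (p * k + p * (n - 1)) = of_nat n * ((y - z) $ k) ^ p"
proof -
  have y: "y $ 0 = 0" "y $ 1 = 1" and z: "z $ 0 = 0" "z $ 1 = 1"
    using assms(4,5) by (simp_all add: fps_X_power_2_dvd_sub_X_iff)
  have frob: "y ^ p - z ^ p = (y - z) ^ p"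
    using freshmans_dream_diff[where 'a = "'a fps"] assms(1,2) by simp
  have diff: "fps_X ^ (p * k) dvd y ^ p - z ^ p" "(y ^ p - z ^ p) $ (p * k) = ((y - z) $ k) ^ p"
    unfolding frob mult.commute[of p] using assms(3)
    by (simp_all add: fps_X_power_dvd_power fps_power_nth_mult_of_dvd)
  have X: "fps_X ^ 1 dvd y" "fps_X ^ 1 dvd z" using y z by (simp_all add: fps_X_dvd_iff_nth_0)
  have Xp: "fps_X ^ p dvd y ^ p" "fps_X ^ p dvd z ^ p" and "(y ^ p) $ p = (z ^ p) $ p" "(y ^ p) $ p = 1"
    using fps_X_power_dvd_power[OF X(1), of p] fps_X_power_dvd_power[OF X(2), of p]
      fps_power_nth_mult_of_dvd[OF X(1), of p] fps_power_nth_mult_of_dvd[OF X(2), of p] y z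
    by simp_all
  then show "fps_X ^ (p * k + p * (n - 1)) dvd y ^ (p * n) - z ^ (p * n)"
    and "(y ^ (p * n) - z ^ (p * n)) $ (p * k + p * (n - 1)) = of_nat n * ((y - z) $ k) ^ p"
    using fps_X_power_dvd_power_diff[OF diff(1) Xp, of n] fps_power_diff_nth[OF diff(1) Xp, of n] diff(2)
    by (simp_all add: power_mult)
qed

lemma of_nat_power_CHAR: "prime CHAR('a::comm_semiring_1) \<Longrightarrow> of_nat n ^ CHAR('a) = (of_nat n :: 'a)"
  by (induction n) (simp_all add: freshmans_dream prime_gt_0_nat power_0_left)

lemma of_nat_card_UNIV: "of_nat (card (UNIV :: 'a::{ring_1,finite} set)) = (0 :: 'a)"
proof -
  have "(\<Sum>y\<in>(UNIV :: 'a set). 1 + y) = (\<Sum>y\<in>UNIV. y)"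
    by (rule sum.reindex_bij_witness[of _ "\<lambda>y. y - 1" "\<lambda>y. y + 1"]) simp_all
  then show ?thesis by (simp add: sum.distrib)
qed

lemma CHAR_eq_card_UNIV_if_prime:
  assumes "prime (card (UNIV :: 'a::{ring_1,finite} set))"
  shows "CHAR('a) = card (UNIV :: 'a set)"
proof -
  have "CHAR('a) dvd card (UNIV :: 'a set)"
    using of_nat_card_UNIV of_nat_eq_0_iff_char_dvd by blast
  with assms show ?thesis by (auto simp: prime_nat_iff)
qed

lemma range_of_nat_eq_UNIV_if_card_eq_CHAR:
  assumes "card (UNIV :: 'a::{ring_1,finite} set) = CHAR('a)"
  shows "range (of_nat :: nat \<Rightarrow> 'a) = UNIV"
proof -
  have "inj_on (of_nat :: nat \<Rightarrow> 'a) {..<CHAR('a)}"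
  proof (rule inj_onI)
    have "m = n" if "m \<le> n" "n < CHAR('a)" "of_nat m = (of_nat n :: 'a)" for m n
    proof -
      have "of_nat (n - m) = (0 :: 'a)" using that by (simp add: of_nat_diff)
      then have "CHAR('a) dvd n - m" by (simp add: of_nat_eq_0_iff_char_dvd)
      with that show ?thesis by (auto dest: dvd_imp_le)
    qed
    then show "m = n" if "m \<in> {..<CHAR('a)}" "n \<in> {..<CHAR('a)}" "of_nat m = (of_nat n :: 'a)" for m n
      using that by (metis lessThan_iff nle_le)
  qed
  then have "of_nat ` {..<CHAR('a)} = (UNIV :: 'a set)"
    using assms by (intro card_eq_UNIV_imp_eq_UNIV) (simp_all add: card_image)
  then show ?thesis by blast
qed

lemma power_card_UNIV_eq_self_if_prime:
  assumes "prime (card (UNIV :: 'a::{comm_ring_1,finite} set))"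
  shows "(x :: 'a) ^ card (UNIV :: 'a set) = x"
proof -
  have CHAR: "CHAR('a) = card (UNIV :: 'a set)" using assms by (rule CHAR_eq_card_UNIV_if_prime)
  obtain n where "x = of_nat n"
    using range_of_nat_eq_UNIV_if_card_eq_CHAR[OF CHAR[symmetric]] by (metis UNIV_I image_iff)
  then show ?thesis using of_nat_power_CHAR[where 'a='a, of n] assms by (simp add: CHAR)
qed

section \<open>The derivative of a commutator\<close>

lemma fps_deriv_compose_fps_inv:
  fixes v :: "'a::field fps"
  assumes "v $ 0 = 0" "v $ 1 \<noteq> 0"
  shows "(fps_deriv v oo fps_inv v) * fps_deriv (fps_inv v) = 1"
proof -
  have "fps_inv v $ 0 = 0" by (simp add: fps_inv_def)
  then show ?thesis
    using arg_cong[OF fps_inv_right[OF assms], of fps_deriv] by (simp add: fps_compose_deriv)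
qed

lemma fps_comm_eq_compose:
  fixes u v :: "'a::field fps"
  assumes "u $ 0 = 0"
  shows "fps_comm v u = v oo (u oo (fps_inv v oo fps_inv u))"
proof -
  have "fps_inv v $ 0 = 0" "fps_inv u $ 0 = 0" by (simp_all add: fps_inv_def)
  then show ?thesis
    using assms by (simp add: fps_comm_def fps_compose_assoc)
qed

lemma fps_deriv_fps_comm:
  fixes u v y :: "'a::field fps"
  assumes "v $ 0 = 0" "v $ 1 \<noteq> 0" "u $ 0 = 0" "u $ 1 \<noteq> 0"
    and y: "y = fps_inv v oo fps_inv u"
  shows "fps_deriv (fps_comm v u) * ((fps_deriv v oo y) * (fps_deriv u oo fps_inv u))
    = (fps_deriv v oo (u oo y)) * (fps_deriv u oo y)"
proof -
  have inv0: "fps_inv v $ 0 = 0" "fps_inv u $ 0 = 0" by (simp_all add: fps_inv_def)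
  then have y0: "y $ 0 = 0" by (simp add: y)
  have "fps_deriv (fps_comm v u) = (fps_deriv v oo (u oo y)) * ((fps_deriv u oo y) * fps_deriv y)"
    using y0 assms(3)
    by (simp add: fps_comm_eq_compose[OF assms(3), of v, folded y] fps_compose_deriv)
  also have "fps_deriv y = (fps_deriv (fps_inv v) oo fps_inv u) * fps_deriv (fps_inv u)"
    using inv0 by (simp add: y fps_compose_deriv)
  finally have "fps_deriv (fps_comm v u) * ((fps_deriv v oo y) * (fps_deriv u oo fps_inv u))
    = (fps_deriv v oo (u oo y)) * (fps_deriv u oo y)
      * (((fps_deriv v oo y) * (fps_deriv (fps_inv v) oo fps_inv u))
      * ((fps_deriv u oo fps_inv u) * fps_deriv (fps_inv u)))"
    by (simp only: ac_simps)
  moreover have "(fps_deriv v oo y) * (fps_deriv (fps_inv v) oo fps_inv u) = 1"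
    using arg_cong[OF fps_deriv_compose_fps_inv[OF assms(1,2)], of "\<lambda>f. f oo fps_inv u"] inv0
    by (simp add: y fps_compose_mult_distrib fps_compose_assoc)
  moreover have "(fps_deriv u oo fps_inv u) * fps_deriv (fps_inv u) = 1"
    using assms(3,4) by (rule fps_deriv_compose_fps_inv)
  ultimately show ?thesis by simp
qed

section \<open>The leading term of the commutator\<close>

lemma fps_X_power_dvd_compose_diff_of_support:
  fixes D g h :: "'a::idom fps"
  assumes D: "\<And>m. D $ m \<noteq> 0 \<Longrightarrow> m = 0 \<or> (\<exists>m'. m = p * m' \<and> j \<le> m')" and "1 \<le> j"
    and gh: "fps_X ^ a dvd g ^ p - h ^ p" "g $ 0 = 0" "h $ 0 = 0"
  shows "fps_X ^ (a + p * (j - 1)) dvd (D oo g) - (D oo h)"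
  unfolding fps_X_power_dvd_iff
proof (intro allI impI)
  fix n assume n: "n < a + p * (j - 1)"
  have "D $ m * ((g ^ m) $ n - (h ^ m) $ n) = 0" for m
  proof -
    consider "D $ m = 0" | "m = 0" | m' where "m = p * m'" "j \<le> m'" using D by blast
    then show ?thesis
    proof cases
      case 3
      have "fps_X ^ p dvd g ^ p" "fps_X ^ p dvd h ^ p"
        using gh(2,3) fps_X_power_dvd_power[of 1 _ p] by (simp_all add: fps_X_dvd_iff_nth_0)
      then have "fps_X ^ (a + p * (m' - 1)) dvd (g ^ p) ^ m' - (h ^ p) ^ m'"
        using gh(1) by (intro fps_X_power_dvd_power_diff)
      moreover have "n < a + p * (m' - 1)"
        using n \<open>j \<le> m'\<close> by (meson diff_le_mono less_le_trans mult_le_mono2 nat_add_left_cancel_le)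
      ultimately have "((g ^ p) ^ m' - (h ^ p) ^ m') $ n = 0" by (rule fps_X_power_dvd_nth)
      then show ?thesis by (simp add: 3 power_mult)
    qed simp_all
  qed
  then have "(\<Sum>m = 0..n. D $ m * ((g ^ m) $ n - (h ^ m) $ n)) = 0"
    by (intro sum.neutral) blast
  then show "((D oo g) - (D oo h)) $ n = 0"
    by (simp add: fps_compose_nth sum_subtractf right_diff_distrib)
qed

lemma fps_deriv_nth_S_set:
  fixes v :: "'a::field fps"
  assumes "CHAR('a) = p" "v \<in> S_set p" "\<forall>n. 2 \<le> n \<and> n < p * j \<longrightarrow> v $ n = 0"
    and "fps_deriv v $ m \<noteq> 0"
  shows "m = 0 \<or> (\<exists>m'. m = p * m' \<and> j \<le> m')"
proof (cases "m = 0")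
  case False
  have "of_nat (m + 1) \<noteq> (0 :: 'a)" "v $ (m + 1) \<noteq> 0" using assms(4) by auto
  then have "\<not> p dvd m + 1" "v $ (m + 1) \<noteq> 0"
    using assms(1) of_nat_eq_0_iff_char_dvd by blast+
  moreover have "(m + 1) mod p \<noteq> 0 \<and> (m + 1) mod p \<noteq> 1 \<longrightarrow> v $ (m + 1) = 0"
    using assms(2) False by (simp add: S_set_def)
  ultimately have "(m + 1) mod p = 1" by (auto simp: dvd_eq_mod_eq_0)
  then have "m = p * (m div p)" "p > 1"
    using False by (auto simp: mod_Suc split: if_splits)
  moreover have "p * j \<le> m"
  proof -
    have "\<not> m + 1 < p * j" using assms(3) \<open>v $ (m + 1) \<noteq> 0\<close> False by auto
    moreover have "m + 1 \<noteq> p * j" using \<open>\<not> p dvd m + 1\<close> by auto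
    ultimately show ?thesis by linarith
  qed
  ultimately have "p * j \<le> p * (m div p)" by simp
  then have "j \<le> m div p" using \<open>p > 1\<close> by simp
  then show ?thesis
    using \<open>m = p * (m div p)\<close> by blast
qed simp

lemma fps_deriv_S_set_compose_diff:
  fixes v g y :: "'a::field fps"
  assumes "CHAR('a) = p" "prime p" "1 \<le> j"
    and "v \<in> S_set p" "\<forall>n. 2 \<le> n \<and> n < p * j \<longrightarrow> v $ n = 0"
    and "fps_X ^ a dvd g - y" "g $ 0 = 0" "y $ 0 = 0"
  shows "fps_X ^ (a * p + p * (j - 1)) dvd (fps_deriv v oo g) - (fps_deriv v oo y)"
proof (rule fps_X_power_dvd_compose_diff_of_support)
  show "m = 0 \<or> (\<exists>m'. m = p * m' \<and> j \<le> m')" if "fps_deriv v $ m \<noteq> 0" for m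
    using assms(1,4,5) that by (rule fps_deriv_nth_S_set)
  have "g ^ p - y ^ p = (g - y) ^ p"
    using freshmans_dream_diff[where 'a = "'a fps"] assms(1,2) by simp
  then show "fps_X ^ (a * p) dvd g ^ p - y ^ p"
    using assms(6) by (simp add: fps_X_power_dvd_power)
qed (use assms in simp_all)

lemma
  fixes v z :: "'a::field fps"
  assumes "CHAR('a) = p" "prime p" "2 \<le> k"
    and v: "v $ 0 = 0" "v $ 1 = 1" "\<forall>n. 2 \<le> n \<and> n < k \<longrightarrow> v $ n = 0"
    and z: "fps_X ^ 2 dvd z - fps_X"
  shows fps_X_power_dvd_fps_inv_compose_power_diff:
      "fps_X ^ (p * k + p * (n - 1)) dvd (fps_inv v oo z) ^ (p * n) - z ^ (p * n)"
    and fps_inv_compose_power_diff_nth: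
      "((fps_inv v oo z) ^ (p * n) - z ^ (p * n)) $ (p * k + p * (n - 1)) = of_nat n * (- v $ k) ^ p"
proof -
  define y where "y = fps_inv v oo z"
  have vX: "fps_X ^ k dvd v - fps_X"
    unfolding fps_X_power_dvd_iff
  proof (intro allI impI)
    fix n assume "n < k"
    then show "(v - fps_X) $ n = 0" using v by (cases "n < 2") (auto simp: less_2_cases_iff)
  qed
  have yz: "fps_X ^ (k + 1) dvd y - z + (v - fps_X)"
    unfolding y_def using v(1,2) vX z by (rule fps_inv_compose_sub)
  have "fps_X ^ k dvd y - z + (v - fps_X)" by (rule dvd_trans[OF le_imp_power_dvd yz]) simp
  from dvd_diff[OF this vX] have yz_k: "fps_X ^ k dvd y - z" by simp
  have "(y - z) $ k = - v $ k"
    using fps_X_power_dvd_nth[OF yz, of k] \<open>2 \<le> k\<close> by (simp add: algebra_simps)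
  moreover have "fps_X ^ 2 dvd y - fps_X"
  proof -
    have "fps_X ^ 2 dvd y - z" using yz_k \<open>2 \<le> k\<close> by (metis dvd_trans le_imp_power_dvd)
    then have "fps_X ^ 2 dvd (y - z) + (z - fps_X)" using z by (rule dvd_add)
    then show ?thesis by simp
  qed
  ultimately show "fps_X ^ (p * k + p * (n - 1)) dvd y ^ (p * n) - z ^ (p * n)"
    and "(y ^ (p * n) - z ^ (p * n)) $ (p * k + p * (n - 1)) = of_nat n * (- v $ k) ^ p"
    using fps_X_power_dvd_power_CHAR_diff[OF assms(1,2) yz_k _ z]
      fps_power_CHAR_diff_nth[OF assms(1,2) yz_k _ z] by simp_all
qed

lemma commutator_exponent_bound:
  fixes p i j :: nat
  assumes "2 \<le> p" "1 \<le> j" "j < i"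
  shows "p * (p * j + i - 1) + 1 \<le> (p * i + 1) * p + p * (j - 1)"
proof -
  obtain d where i: "i = j + 1 + d" using assms(3) less_imp_Suc_add by fastforce
  have "p * (p * j + i - 1) + 1 = p * p * j + p * j + p * d + 1" by (simp add: i algebra_simps)
  moreover have "p * (j - 1) + p = p * j" using assms(2) by (cases j) simp_all
  then have "(p * i + 1) * p + p * (j - 1) = p * p * j + p * p + p * p * d + p * j"
    by (simp add: i algebra_simps)
  moreover have "p * d \<le> p * p * d" "1 \<le> p * p" using assms(1) by simp_all
  ultimately show ?thesis by linarith
qed

lemma fps_X_power_dvd_deriv_compose_diff:
  fixes p i j :: nat and ui :: "'a::field" and u v y :: "'a fps"
  assumes p: "CHAR('a) = p" "prime p" and ij: "1 \<le> j" "j < i"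
    and u: "u = fps_X + fps_const ui * fps_X ^ (p * i + 1)"
    and v: "v \<in> S_set p" "\<forall>n. 2 \<le> n \<and> n < p * j \<longrightarrow> v $ n = 0"
    and y: "y $ 0 = 0"
  shows "fps_X ^ (p * (p * j + i - 1) + 1) dvd (fps_deriv v oo (u oo y)) - (fps_deriv v oo y)"
proof -
  have "(u oo y) - y = fps_const ui * y ^ (p * i + 1)"
    using y by (simp add: u fps_compose_add_distrib fps_compose_mult_distrib
        fps_compose_power[symmetric])
  moreover have "fps_X ^ (p * i + 1) dvd y ^ (p * i + 1)"
    using y by (intro dvd_power_same) (simp add: fps_X_dvd_iff_nth_0)
  ultimately have "fps_X ^ ((p * i + 1) * p + p * (j - 1))
      dvd (fps_deriv v oo (u oo y)) - (fps_deriv v oo y)"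
    using y by (intro fps_deriv_S_set_compose_diff[OF p ij(1) v]) (simp_all add: u)
  moreover have "p * (p * j + i - 1) + 1 \<le> (p * i + 1) * p + p * (j - 1)"
    using prime_ge_2_nat[OF p(2)] ij by (rule commutator_exponent_bound)
  ultimately show ?thesis by (rule dvd_trans[OF le_imp_power_dvd, rotated])
qed

lemma
  fixes p i j :: nat and ui :: "'a::field" and u v :: "'a fps"
  assumes p: "CHAR('a) = p" "prime p" and ij: "1 \<le> j" "j < i"
    and u: "u = fps_X + fps_const ui * fps_X ^ (p * i + 1)"
    and v: "v \<in> S_set p" "\<forall>n. 2 \<le> n \<and> n < p * j \<longrightarrow> v $ n = 0"
  shows fps_X_power_dvd_deriv_fps_comm_sub_1:
      "fps_X ^ (p * (p * j + i - 1)) dvd fps_deriv (fps_comm v u) - 1"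
    and fps_deriv_fps_comm_sub_1_nth:
      "(fps_deriv (fps_comm v u) - 1) $ (p * (p * j + i - 1)) = of_nat i * ui * (- v $ (p * j)) ^ p"
proof -
  define N where "N = p * (p * j + i - 1)"
  define z where "z = fps_inv u"
  define y where "y = fps_inv v oo z"
  have "2 \<le> p" using p(2) by (rule prime_ge_2_nat)
  have pj: "2 \<le> p * j" using mult_le_mono[OF \<open>2 \<le> p\<close> ij(1)] by simp
  have pi: "p * i \<noteq> 0" using \<open>2 \<le> p\<close> ij by simp
  have v01: "v $ 0 = 0" "v $ 1 = 1" using v(1) by (simp_all add: S_set_def)
  have u01: "u $ 0 = 0" "u $ 1 = 1" using pi by (simp_all add: u)
  have y0: "y $ 0 = 0" and z0: "z $ 0 = 0" by (simp_all add: y_def z_def fps_inv_def)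
  have z: "fps_X ^ 2 dvd z - fps_X"
    unfolding z_def using u01 by (rule fps_X_power_2_dvd_fps_inv_sub_X)
  have "fps_deriv u = 1 + fps_const ui * fps_X ^ (p * i)"
    unfolding u using fps_deriv_X_plus_monom_CHAR[of ui i, unfolded p(1)] .
  then have du: "fps_deriv u oo g = 1 + fps_const ui * g ^ (p * i)" if "g $ 0 = 0" for g
    using that by (simp add: fps_compose_add_distrib fps_compose_mult_distrib fps_compose_power[symmetric])
  define P where "P = (fps_deriv v oo y) * (fps_deriv u oo z)"
  define R where "R = ((fps_deriv v oo (u oo y)) - (fps_deriv v oo y)) * (fps_deriv u oo y)"
  define Q where "Q = fps_const ui * (y ^ (p * i) - z ^ (p * i))"
  have "fps_deriv (fps_comm v u) * P = (fps_deriv v oo (u oo y)) * (fps_deriv u oo y)"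
    unfolding P_def z_def using v01 u01 by (intro fps_deriv_fps_comm) (simp_all add: y_def z_def)
  then have split: "(fps_deriv (fps_comm v u) - 1) * P = R + (fps_deriv v oo y) * Q"
    by (simp add: P_def R_def Q_def du y0 z0 algebra_simps)
  have R: "fps_X ^ (N + 1) dvd R"
    unfolding R_def N_def using y0 by (intro dvd_mult2 fps_X_power_dvd_deriv_compose_diff[OF p ij u v])
  have N: "N = p * (p * j) + p * (i - 1)" using ij by (simp add: N_def algebra_simps)
  have "fps_X ^ N dvd y ^ (p * i) - z ^ (p * i)"
    and "(y ^ (p * i) - z ^ (p * i)) $ N = of_nat i * (- v $ (p * j)) ^ p"
    unfolding N y_def
    by (fact fps_X_power_dvd_fps_inv_compose_power_diff[OF p pj v01 v(2) z]
        fps_inv_compose_power_diff_nth[OF p pj v01 v(2) z])+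
  then have Q: "fps_X ^ N dvd Q" "Q $ N = of_nat i * ui * (- v $ (p * j)) ^ p"
    by (simp_all add: Q_def)
  have WP: "fps_X ^ N dvd (fps_deriv (fps_comm v u) - 1) * P"
    unfolding split using dvd_trans[OF le_imp_power_dvd R] Q(1) by (simp add: dvd_add)
  have "((fps_deriv (fps_comm v u) - 1) * P) $ N = of_nat i * ui * (- v $ (p * j)) ^ p"
    unfolding split
    using fps_X_power_dvd_nth[OF R, of N] fps_mult_nth_add_of_dvd[of 0 "fps_deriv v oo y" N Q] Q v01
    by simp
  moreover have P0: "P $ 0 = 1" using v01 u01 by (simp add: P_def)
  then show "fps_X ^ N dvd fps_deriv (fps_comm v u) - 1"
    using fps_X_power_dvd_mult_unit(1)[OF _ WP] by simp
  have "(fps_deriv (fps_comm v u) - 1) $ N = ((fps_deriv (fps_comm v u) - 1) * P) $ N / P $ 0"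
    using P0 WP by (intro fps_X_power_dvd_mult_unit(2)) simp_all
  ultimately show "(fps_deriv (fps_comm v u) - 1) $ N = of_nat i * ui * (- v $ (p * j)) ^ p"
    using P0 by simp
qed

theorem lemma5p2:
  fixes p i j :: nat and ui vpj :: "'a::{field,finite}" and u v :: "'a fps"
  assumes "prime p" and "card (UNIV :: 'a set) = p"
    and "1 \<le> j" and "j < i" and "coprime i p"
    and "u = fps_X + fps_const ui * fps_X ^ (p * i + 1)"
    and "v \<in> S_set p"
    and "\<forall>n. 2 \<le> n \<and> n < p * j \<longrightarrow> v $ n = 0"
    and "v $ (p * j) = vpj"
    and "ui * vpj \<noteq> 0"
  shows "(\<forall>k. 2 \<le> k \<and> k < p * (p * j + i - 1) + 1 \<and> k mod p = 1 \<longrightarrow> fps_comm v u $ k = 0)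
     \<and> fps_comm v u $ (p * (p * j + i - 1) + 1) \<noteq> 0
     \<and> fps_comm v u $ (p * (p * j + i - 1) + 1) = - (of_nat i * ui * vpj)"
proof -
  define N where "N = p * (p * j + i - 1)"
  define W where "W = fps_comm v u"
  have CHAR: "CHAR('a) = p"
    using CHAR_eq_card_UNIV_if_prime[where 'a = 'a] assms(1,2) by simp
  have "(- vpj) ^ p = - vpj"
    using power_card_UNIV_eq_self_if_prime[of "- vpj"] assms(1,2) by simp
  then have lead: "(fps_deriv W - 1) $ N = - (of_nat i * ui * vpj)"
    and dvd: "fps_X ^ N dvd fps_deriv W - 1"
    using fps_deriv_fps_comm_sub_1_nth[OF CHAR assms(1,3,4,6-8)]
      fps_X_power_dvd_deriv_fps_comm_sub_1[OF CHAR assms(1,3,4,6-8)]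
    by (simp_all add: N_def W_def assms(9))
  have nth: "W $ k = (fps_deriv W - 1) $ (k - 1)" if "k mod p = 1" "2 \<le> k" for k
    using that by (intro fps_nth_eq_deriv_sub_1_nth_if_mod_CHAR) (simp_all add: CHAR)
  have "\<forall>k. 2 \<le> k \<and> k < N + 1 \<and> k mod p = 1 \<longrightarrow> W $ k = 0"
  proof (intro allI impI)
    fix k assume k: "2 \<le> k \<and> k < N + 1 \<and> k mod p = 1"
    then have "W $ k = (fps_deriv W - 1) $ (k - 1)" by (intro nth) simp_all
    also have "\<dots> = 0" using k by (intro fps_X_power_dvd_nth[OF dvd]) linarith
    finally show "W $ k = 0" .
  qed
  moreover have "2 \<le> p" using assms(1) by (rule prime_ge_2_nat)
  then have "(N + 1) mod p = 1" "2 \<le> N + 1" using assms(3,4) by (simp_all add: N_def mod_Suc)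
  then have "W $ (N + 1) = - (of_nat i * ui * vpj)"
    using nth[of "N + 1"] lead by (simp only: add_diff_cancel_right')
  moreover have "of_nat i \<noteq> (0 :: 'a)"
    using assms(5) CHAR by (simp add: of_nat_neq_0_if_coprime_CHAR)
  ultimately show ?thesis using assms(10) unfolding W_def N_def by simp
qed

end
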